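(* Assume Assumptions (A) and (B) and suppose $\|\theta_0-\theta_{*,p}\|\le c_0\delta_n^{1/\beta}$. Then there exist $c,c'>0$ such that for any sufficiently large $L$, $$\mathbb P^n_{\theta_0}\Big(\Big\|\int\theta\,d\Pi(\theta\mid Z^{(n)})-\theta_0\Big\|>e^{-n\delta_n^2}+L^{1/\beta}\delta_n^{1/\beta}\Big)\le c'e^{-cn\delta_n^2}.$$
   Context: Let $\Theta\subset\ell^2(\mathbb N)$ contain $\mathbb R^p$ (sequences vanishing after coordinate $p$); $\|\cdot\|$ is the $\ell^2$ norm. For $\theta\in\Theta$, $\mathbb P_\theta$ has density $p_\theta$ w.r.t. a measure $\nu$ on $\mathcal Z$; data $Z^{(n)}=(Z_i)_{i\le n}$ have law $\otimes_i\mathbb P_\theta$; $\ell_n(\theta)=\sum_i\log p_\theta(Z_i)$. The prior $\Pi$ is supported on $\mathbb R^p$ with Lebesgue density $\pi$ and the posterior $\Pi(\cdot\mid Z^{(n)})$ has density $\propto e^{\ell_n}\pi$. A function $f$ is $m$-strongly concave if $f(\theta')\le f(\theta)+(\theta'-\theta)^\top\nabla f(\theta)-\frac m2\|\theta-\theta'\|^2$ for all $\theta,\theta'$. Assumption (A): the data have law $\mathbb P^n_{\theta_0}$ for fixed $\theta_0\in\Theta$; there are $c_0>0$, $\theta_{*,p}\in\mathbb R^p$ with $\|\theta_{*,p}\|\le c_0$ and $0<\delta_n\to0$ such that for some $\beta\ge1$, any $c>0$ and any sufficiently large $L$ there are $C_1,\dots,C_4>0$ with $\mathbb P^n_{\theta_0}(\Pi(\{\theta:\|\theta-\theta_{*,p}\|^\beta>L\delta_n\}\mid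 Z^{(n)})\ge e^{-cn\delta_n^2})\le C_2e^{-C_1n\delta_n^2}$ and $\mathbb P^n_{\theta_0}(\int_{\|\theta-\theta_{*,p}\|\le\delta_n}e^{\ell_n(\theta)-\ell_n(\theta_0)}\pi(\theta)d\theta\le e^{-C_3n\delta_n^2})\le e^{-C_4n\delta_n^2}$. Assumption (B): $\log\pi$ is $m_\pi$-strongly concave with $\Lambda_\pi$-Lipschitz gradient, its maximiser has norm $\le c_0$, and the fourth moments of $\Pi$ are bounded uniformly in $n$ and $p$. *)

theory Defs
  imports "HOL-Probability.Probability"
begin

definition l2seq :: "(nat \<Rightarrow> real) set" where
  "l2seq = {x. summable (\<lambda>i. (x i)^2)}"

definition l2norm :: "(nat \<Rightarrow> real) \<Rightarrow> real" where
  "l2norm x = sqrt (\<Sum>i. (x i)^2)"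

text \<open>R^p inside l2: sequences vanishing from coordinate p on (coordinates 0..p-1).\<close>
definition Rp :: "nat \<Rightarrow> (nat \<Rightarrow> real) set" where
  "Rp p = {x. \<forall>i\<ge>p. x i = 0}"

definition ext0 :: "nat \<Rightarrow> (nat \<Rightarrow> real) \<Rightarrow> (nat \<Rightarrow> real)" where
  "ext0 p x = (\<lambda>i. if i < p then x i else 0)"

definition Leb :: "nat \<Rightarrow> (nat \<Rightarrow> real) measure" where
  "Leb p = PiM {..<p} (\<lambda>_. lborel)"

text \<open>Likelihood exp(l_n(theta)) = prod_{i<n} p_theta(Z_i).\<close>
definition lik :: "((nat \<Rightarrow> real) \<Rightarrow> 'z \<Rightarrow> real) \<Rightarrow> nat \<Rightarrow> (nat \<Rightarrow> real) \<Rightarrow> (nat \<Rightarrow> 'z) \<Rightarrow> real" where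
  "lik dens n \<theta> Z = (\<Prod>i<n. dens \<theta> (Z i))"

definition sample :: "'z measure \<Rightarrow> ((nat \<Rightarrow> real) \<Rightarrow> 'z \<Rightarrow> real) \<Rightarrow> (nat \<Rightarrow> real) \<Rightarrow> nat \<Rightarrow> (nat \<Rightarrow> 'z) measure" where
  "sample \<nu> dens \<theta> n = PiM {..<n} (\<lambda>_. density \<nu> (dens \<theta>))"

definition post_norm :: "((nat \<Rightarrow> real) \<Rightarrow> 'z \<Rightarrow> real) \<Rightarrow> ((nat \<Rightarrow> real) \<Rightarrow> real) \<Rightarrow> nat \<Rightarrow> nat \<Rightarrow> (nat \<Rightarrow> 'z) \<Rightarrow> real" where
  "post_norm dens \<pi> n p Z = (\<integral>x. lik dens n (ext0 p x) Z * \<pi> (ext0 p x) \<partial>Leb p)"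

definition post_prob :: "((nat \<Rightarrow> real) \<Rightarrow> 'z \<Rightarrow> real) \<Rightarrow> ((nat \<Rightarrow> real) \<Rightarrow> real) \<Rightarrow> nat \<Rightarrow> nat \<Rightarrow> (nat \<Rightarrow> 'z) \<Rightarrow> (nat \<Rightarrow> real) set \<Rightarrow> real" where
  "post_prob dens \<pi> n p Z A =
     (\<integral>x. indicator A (ext0 p x) * lik dens n (ext0 p x) Z * \<pi> (ext0 p x) \<partial>Leb p) / post_norm dens \<pi> n p Z"

definition post_mean :: "((nat \<Rightarrow> real) \<Rightarrow> 'z \<Rightarrow> real) \<Rightarrow> ((nat \<Rightarrow> real) \<Rightarrow> real) \<Rightarrow> nat \<Rightarrow> nat \<Rightarrow> (nat \<Rightarrow> 'z) \<Rightarrow> (nat \<Rightarrow> real)" where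
  "post_mean dens \<pi> n p Z = (\<lambda>j.
     (\<integral>x. ext0 p x j * lik dens n (ext0 p x) Z * \<pi> (ext0 p x) \<partial>Leb p) / post_norm dens \<pi> n p Z)"

end

(*
  Write s = n delta^2 and rho = (L1 delta)^(1/beta).  Likelihood ratios have mean at most 1 under
  P_theta0, so by Fubini and Markov the likelihood-ratio weighted prior second moment about theta*
  exceeds e^s M2 with probability at most e^(-s).  Assumption (A) makes two further events
  exponentially unlikely: the posterior gives mass at least e^(-2(C3+3)s) to the complement of the
  rho-ball, or the likelihood-ratio weighted prior mass of the delta-ball is at most e^(-C3 s).
  Off these events the normalising constant is at least e^(-C3 s) times the likelihood at theta0,
  hence the posterior second moment is at most e^((C3+1)s) M2, and Jensen's inequality with the
  pointwise bound r <= rho + t r^2/2 + [r > rho]/(2t), for t = e^(-(C3+3)s), yields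
  |E(theta | Z) - theta*| <= rho + e^(-s).  The triangle inequality and
  |theta0 - theta*| <= c0 delta^(1/beta) move the centre to theta0.
*)
theory Submission
  imports Defs
begin

section \<open>Square-summable sequences\<close>

lemma l2norm_eq_L2_set:
  assumes "\<And>i. p \<le> i \<Longrightarrow> x i = 0"
  shows "l2norm x = L2_set x {..<p}"
proof -
  have "(\<Sum>i. (x i)\<^sup>2) = (\<Sum>i<p. (x i)\<^sup>2)"
    by (rule suminf_finite) (auto simp: assms)
  then show ?thesis
    by (simp add: l2norm_def L2_set_def)
qed

lemma l2norm_nonneg: "x \<in> l2seq \<Longrightarrow> 0 \<le> l2norm x"
  by (simp add: l2norm_def l2seq_def suminf_nonneg)

lemma l2norm_minus_commute: "l2norm (x - y) = l2norm (y - x)"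
  by (simp add: l2norm_def power2_commute)

lemma Rp_subset_l2seq: "Rp p \<subseteq> l2seq"
  unfolding Rp_def l2seq_def by (auto intro!: summable_finite[of "{..<p}"] simp: not_less[symmetric])

lemma ext0_in_Rp: "ext0 p x \<in> Rp p"
  by (simp add: ext0_def Rp_def)

lemma post_mean_in_Rp: "post_mean dens prior n p Z \<in> Rp p"
  by (simp add: Rp_def post_mean_def ext0_def)

lemma l2norm_ext0_diff:
  assumes "\<theta> \<in> Rp p"
  shows "l2norm (ext0 p x - \<theta>) = L2_set (\<lambda>j. x j - \<theta> j) {..<p}"
proof -
  have "l2norm (ext0 p x - \<theta>) = L2_set (ext0 p x - \<theta>) {..<p}"
    using assms by (intro l2norm_eq_L2_set) (auto simp: Rp_def ext0_def)
  also have "\<dots> = L2_set (\<lambda>j. x j - \<theta> j) {..<p}"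
    by (intro L2_set_cong) (auto simp: ext0_def)
  finally show ?thesis .
qed

lemma l2seq_add:
  assumes "x \<in> l2seq" "y \<in> l2seq"
  shows "(\<lambda>i. x i + y i) \<in> l2seq"
proof -
  have "(x i + y i)\<^sup>2 \<le> 2 * (x i)\<^sup>2 + 2 * (y i)\<^sup>2" for i
    using zero_le_square[of "x i - y i"] by (simp add: power2_eq_square algebra_simps)
  moreover have "summable (\<lambda>i. 2 * (x i)\<^sup>2 + 2 * (y i)\<^sup>2)"
    using assms by (intro summable_add summable_mult) (auto simp: l2seq_def)
  ultimately show ?thesis
    unfolding l2seq_def by (auto intro: summable_comparison_test'[where N = 0])
qed

lemma l2seq_diff:
  assumes "x \<in> l2seq" "y \<in> l2seq"
  shows "x - y \<in> l2seq"
proof -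
  have "(\<lambda>i. - y i) \<in> l2seq"
    using assms(2) by (simp add: l2seq_def)
  from l2seq_add[OF assms(1) this] show ?thesis
    by (simp add: fun_diff_def)
qed

lemma l2norm_triangle:
  assumes x: "x \<in> l2seq" and y: "y \<in> l2seq"
  shows "l2norm (\<lambda>i. x i + y i) \<le> l2norm x + l2norm y"
proof -
  have summable: "summable (\<lambda>i. (z i)\<^sup>2)" if "z \<in> l2seq" for z
    using that by (simp add: l2seq_def)
  have "(\<lambda>i. x i + y i) \<in> l2seq"
    using x y by (rule l2seq_add)
  have partial: "L2_set (\<lambda>i. x i + y i) {..<N} \<le> l2norm x + l2norm y" for N
  proof -
    have truncate: "L2_set z {..<N} \<le> l2norm z" if "z \<in> l2seq" for z
      unfolding L2_set_def l2norm_def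
      by (intro real_sqrt_le_mono sum_le_suminf summable[OF that]) auto
    show ?thesis
      using L2_set_triangle_ineq[of x y "{..<N}"] truncate[OF x] truncate[OF y] by linarith
  qed
  have "(\<Sum>i. (x i + y i)\<^sup>2) \<le> (l2norm x + l2norm y)\<^sup>2"
  proof (rule suminf_le_const[OF summable[OF \<open>(\<lambda>i. x i + y i) \<in> l2seq\<close>]])
    fix N
    have "(L2_set (\<lambda>i. x i + y i) {..<N})\<^sup>2 \<le> (l2norm x + l2norm y)\<^sup>2"
      by (rule power_mono[OF partial L2_set_nonneg])
    then show "(\<Sum>i<N. (x i + y i)\<^sup>2) \<le> (l2norm x + l2norm y)\<^sup>2"
      by (simp add: L2_set_def sum_nonneg)
  qed
  then have "l2norm (\<lambda>i. x i + y i) \<le> sqrt ((l2norm x + l2norm y)\<^sup>2)"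
    unfolding l2norm_def[of "\<lambda>i. x i + y i"] by (rule real_sqrt_le_mono)
  also have "\<dots> = l2norm x + l2norm y"
    using l2norm_nonneg[OF x] l2norm_nonneg[OF y] by simp
  finally show ?thesis .
qed

lemma l2norm_diff_triangle:
  assumes "x \<in> l2seq" "y \<in> l2seq" "z \<in> l2seq"
  shows "l2norm (x - z) \<le> l2norm (x - y) + l2norm (y - z)"
  using l2norm_triangle[OF l2seq_diff[of x y] l2seq_diff[of y z]] assms
  by (simp add: fun_diff_def)

lemma l2norm_diff_le:
  assumes "x \<in> l2seq" "y \<in> l2seq"
  shows "l2norm (x - y) \<le> l2norm x + l2norm y"
proof -
  have "(\<lambda>_. 0) \<in> l2seq"
    by (simp add: l2seq_def)
  from l2norm_diff_triangle[OF assms(1) this assms(2)]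
  have "l2norm (x - y) \<le> l2norm (x - (\<lambda>_. 0)) + l2norm ((\<lambda>_. 0) - y)" .
  also have "\<dots> = l2norm x + l2norm y"
    by (simp add: l2norm_def fun_diff_def)
  finally show ?thesis .
qed

lemma le_half_square_plus_inverse:
  fixes r t :: real
  assumes "0 < t"
  shows "r \<le> t / 2 * r\<^sup>2 + 1 / (2 * t)"
proof -
  have "0 \<le> (t * r - 1)\<^sup>2 / (2 * t)"
    using assms by simp
  also have "\<dots> = t / 2 * r\<^sup>2 + 1 / (2 * t) - r"
    using assms by (simp add: power2_eq_square field_simps)
  finally show ?thesis by simp
qed

lemma sq_le_one_plus_fourth: "(a::real)\<^sup>2 \<le> 1 + a ^ 4"
proof -
  have "0 \<le> (a\<^sup>2 - 1)\<^sup>2 + a ^ 4 + 1" by simp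
  then show ?thesis by (simp add: power2_eq_square power4_eq_xxxx algebra_simps)
qed

lemma l2norm_diff_sq_le_fourth:
  assumes "x \<in> l2seq" "y \<in> l2seq" "l2norm y \<le> c"
  shows "(l2norm (x - y))\<^sup>2 \<le> 2 * (1 + (l2norm x)^4) + 2 * c\<^sup>2"
proof -
  have "(l2norm (x - y))\<^sup>2 \<le> (l2norm x + l2norm y)\<^sup>2"
    using assms l2seq_diff by (intro power_mono l2norm_diff_le l2norm_nonneg) auto
  also have "\<dots> \<le> 2 * (l2norm x)\<^sup>2 + 2 * (l2norm y)\<^sup>2"
    using zero_le_square[of "l2norm x - l2norm y"] by (simp add: power2_eq_square algebra_simps)
  also have "\<dots> \<le> 2 * (1 + (l2norm x)^4) + 2 * c\<^sup>2"
    using sq_le_one_plus_fourth[of "l2norm x"] power_mono[OF assms(3) l2norm_nonneg[OF assms(2)], of 2]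
    by simp
  finally show ?thesis .
qed

lemma less_powr_if_root_less:
  fixes a r \<beta> :: real
  assumes "0 < a" "0 < \<beta>" "a powr (1 / \<beta>) < r"
  shows "a < r powr \<beta>"
proof -
  have "a = (a powr (1 / \<beta>)) powr \<beta>"
    using assms by (simp add: powr_powr)
  also have "\<dots> < r powr \<beta>"
    using assms by (intro powr_less_mono2) auto
  finally show ?thesis .
qed

lemma root_sum_le_root:
  fixes a b \<beta> \<delta> L :: real
  assumes "0 < a" "0 \<le> b" "0 < \<beta>" "0 < \<delta>" "(a powr (1 / \<beta>) + b) powr \<beta> \<le> L"
  shows "(a * \<delta>) powr (1 / \<beta>) + b * \<delta> powr (1 / \<beta>) \<le> L powr (1 / \<beta>) * \<delta> powr (1 / \<beta>)"
proof -
  have pos: "0 < a powr (1 / \<beta>) + b"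
    using assms by (simp add: add_pos_nonneg)
  have "a powr (1 / \<beta>) + b = ((a powr (1 / \<beta>) + b) powr \<beta>) powr (1 / \<beta>)"
    using pos assms by (simp add: powr_powr)
  also have "\<dots> \<le> L powr (1 / \<beta>)"
    using pos assms by (intro powr_mono2) auto
  finally have "(a powr (1 / \<beta>) + b) * \<delta> powr (1 / \<beta>) \<le> L powr (1 / \<beta>) * \<delta> powr (1 / \<beta>)"
    by (rule mult_right_mono) simp
  then show ?thesis
    using assms by (simp add: powr_mult distrib_right)
qed

text \<open>The two error terms of weighted_mean_dist_split, for the choice t = e^(-(C+3)s).\<close>

lemma exp_tradeoff_le:
  fixes C s M2 A B :: real
  assumes "0 \<le> C" "0 \<le> s" "M2 \<le> exp s"
    and A: "A \<le> exp (C * s) * (exp s * M2)" and B: "B \<le> exp (- (2 * (C + 3)) * s)"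
  shows "exp (- (C + 3) * s) / 2 * A + 1 / (2 * exp (- (C + 3) * s)) * B \<le> exp (- s)"
proof -
  have "A \<le> exp (C * s) * (exp s * exp s)"
    using A assms(3) by (smt (verit) exp_gt_zero mult_left_mono)
  then have "exp (- (C + 3) * s) / 2 * A \<le> exp (- (C + 3) * s) / 2 * (exp (C * s) * (exp s * exp s))"
    by (rule mult_left_mono) simp
  also have "\<dots> = exp (- s) / 2"
    by (simp flip: exp_add add: algebra_simps)
  finally have first: "exp (- (C + 3) * s) / 2 * A \<le> exp (- s) / 2" .
  have "1 / (2 * exp (- (C + 3) * s)) * B \<le> 1 / (2 * exp (- (C + 3) * s)) * exp (- (2 * (C + 3)) * s)"
    using B by (rule mult_left_mono) simp
  also have "\<dots> = exp (- (C + 3) * s) / 2"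
    by (simp add: exp_minus field_simps flip: exp_add)
  also have "\<dots> \<le> exp (- s) / 2"
    using mult_nonneg_nonneg[OF assms(1,2)] assms(2) by (simp add: algebra_simps)
  finally show ?thesis
    using first by linarith
qed

section \<open>Weighted means of vectors\<close>

lemma integrable_L2_set_dist_mult:
  fixes M :: "(nat \<Rightarrow> real) measure" and w :: "(nat \<Rightarrow> real) \<Rightarrow> real"
  assumes coord: "\<And>j. j < p \<Longrightarrow> (\<lambda>x. x j) \<in> borel_measurable M"
    and w: "integrable M w" "\<And>x. x \<in> space M \<Longrightarrow> 0 \<le> w x"
    and moments: "\<And>j. j < p \<Longrightarrow> integrable M (\<lambda>x. x j * w x)"
  shows "integrable M (\<lambda>x. L2_set (\<lambda>j. x j - c j) {..<p} * w x)"
proof (rule Bochner_Integration.integrable_bound)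
  show "integrable M (\<lambda>x. \<Sum>j<p. \<bar>x j * w x - c j * w x\<bar>)"
    using w moments by (intro Bochner_Integration.integrable_sum integrable_abs) auto
  show "(\<lambda>x. L2_set (\<lambda>j. x j - c j) {..<p} * w x) \<in> borel_measurable M"
    using coord borel_measurable_integrable[OF w(1)] unfolding L2_set_def by measurable
  show "AE x in M. norm (L2_set (\<lambda>j. x j - c j) {..<p} * w x) \<le> norm (\<Sum>j<p. \<bar>x j * w x - c j * w x\<bar>)"
  proof (rule AE_I2)
    fix x assume "x \<in> space M"
    then have "L2_set (\<lambda>j. x j - c j) {..<p} * w x \<le> (\<Sum>j<p. \<bar>x j - c j\<bar>) * w x"
      using w(2) L2_set_le_sum_abs by (intro mult_right_mono) auto
    also have "\<dots> = (\<Sum>j<p. \<bar>x j * w x - c j * w x\<bar>)"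
      unfolding sum_distrib_right using w(2)[OF \<open>x \<in> space M\<close>]
      by (intro sum.cong refl) (metis abs_mult abs_of_nonneg left_diff_distrib)
    finally show "norm (L2_set (\<lambda>j. x j - c j) {..<p} * w x) \<le> norm (\<Sum>j<p. \<bar>x j * w x - c j * w x\<bar>)"
      using w(2)[OF \<open>x \<in> space M\<close>] by (simp add: sum_nonneg)
  qed
qed

lemma L2_set_weighted_mean_le:
  fixes M :: "(nat \<Rightarrow> real) measure" and w :: "(nat \<Rightarrow> real) \<Rightarrow> real"
  assumes coord: "\<And>j. j < p \<Longrightarrow> (\<lambda>x. x j) \<in> borel_measurable M"
    and w: "integrable M w" "\<And>x. x \<in> space M \<Longrightarrow> 0 \<le> w x" "0 < integral\<^sup>L M w"
    and moments: "\<And>j. j < p \<Longrightarrow> integrable M (\<lambda>x. x j * w x)"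
  shows "L2_set (\<lambda>j. (\<integral>x. x j * w x \<partial>M) / integral\<^sup>L M w - c j) {..<p}
           \<le> (\<integral>x. L2_set (\<lambda>j. x j - c j) {..<p} * w x \<partial>M) / integral\<^sup>L M w"
proof -
  define D where "D = integral\<^sup>L M w"
  define u where "u j = (\<integral>x. x j * w x \<partial>M) / D - c j" for j
  define r where "r x = L2_set (\<lambda>j. x j - c j) {..<p}" for x
  define R where "R = (\<integral>x. r x * w x \<partial>M) / D"
  have D: "0 < D"
    using w(3) by (simp add: D_def)
  have centred: "integrable M (\<lambda>x. (x j - c j) * w x)" if "j < p" for j
    using moments[OF that] w(1) by (simp add: left_diff_distrib)
  have centred_sum: "integrable M (\<lambda>x. \<Sum>j<p. u j * ((x j - c j) * w x))"
    using centred by (intro Bochner_Integration.integrable_sum integrable_mult_right) auto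
  have u: "u j = (\<integral>x. (x j - c j) * w x \<partial>M) / D" if "j < p" for j
    using moments[OF that] w(1) D by (simp add: u_def D_def left_diff_distrib field_simps)
  \<comment> \<open>Cauchy-Schwarz inside the integral, against the fixed direction u.\<close>
  have "(L2_set u {..<p})\<^sup>2 = (\<Sum>j<p. u j * (\<integral>x. (x j - c j) * w x \<partial>M)) / D"
    by (simp add: L2_set_def sum_nonneg power2_eq_square u sum_divide_distrib)
  also have "\<dots> = (\<integral>x. (\<Sum>j<p. u j * (x j - c j)) * w x \<partial>M) / D"
    using centred by (simp add: sum_distrib_right mult.assoc)
  also have "\<dots> \<le> (\<integral>x. L2_set u {..<p} * (r x * w x) \<partial>M) / D"
  proof (intro divide_right_mono integral_mono)
    show "integrable M (\<lambda>x. (\<Sum>j<p. u j * (x j - c j)) * w x)"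
      using centred_sum by (simp add: sum_distrib_right mult.assoc)
    show "integrable M (\<lambda>x. L2_set u {..<p} * (r x * w x))"
      unfolding r_def using integrable_L2_set_dist_mult[OF coord w(1,2) moments] by auto
    fix x assume "x \<in> space M"
    have "(\<Sum>j<p. u j * (x j - c j)) \<le> (\<Sum>j<p. \<bar>u j\<bar> * \<bar>x j - c j\<bar>)"
      by (intro sum_mono) (simp add: abs_mult[symmetric])
    also have "\<dots> \<le> L2_set u {..<p} * r x"
      unfolding r_def by (rule L2_set_mult_ineq)
    finally show "(\<Sum>j<p. u j * (x j - c j)) * w x \<le> L2_set u {..<p} * (r x * w x)"
      using w(2)[OF \<open>x \<in> space M\<close>] by (simp add: mult.assoc[symmetric] mult_right_mono)
  qed (use D in simp)
  also have "\<dots> = L2_set u {..<p} * R"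
    by (simp add: R_def)
  finally have square_le: "(L2_set u {..<p})\<^sup>2 \<le> L2_set u {..<p} * R" .
  have "0 \<le> R"
    unfolding R_def r_def using D w(2) by (auto intro!: divide_nonneg_pos integral_nonneg_AE)
  with square_le have "L2_set u {..<p} \<le> R"
    by (cases "L2_set u {..<p} = 0") (auto simp: power2_eq_square less_le)
  then show ?thesis
    by (simp add: u_def[abs_def] R_def r_def D_def)
qed

lemma weighted_mean_dist_split:
  fixes M :: "(nat \<Rightarrow> real) measure" and w e :: "(nat \<Rightarrow> real) \<Rightarrow> real"
  assumes coord: "\<And>j. j < p \<Longrightarrow> (\<lambda>x. x j) \<in> borel_measurable M"
    and w: "integrable M w" "\<And>x. x \<in> space M \<Longrightarrow> 0 \<le> w x" "0 < integral\<^sup>L M w"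
    and moments: "\<And>j. j < p \<Longrightarrow> integrable M (\<lambda>x. x j * w x)"
    and second_moment: "integrable M (\<lambda>x. (L2_set (\<lambda>j. x j - c j) {..<p})\<^sup>2 * w x)"
    and tail: "integrable M (\<lambda>x. e x * w x)" "\<And>x. x \<in> space M \<Longrightarrow> 0 \<le> e x"
      "\<And>x. x \<in> space M \<Longrightarrow> \<rho> < L2_set (\<lambda>j. x j - c j) {..<p} \<Longrightarrow> 1 \<le> e x"
    and "0 \<le> \<rho>" "0 < t"
  shows "L2_set (\<lambda>j. (\<integral>x. x j * w x \<partial>M) / integral\<^sup>L M w - c j) {..<p}
           \<le> \<rho> + t / 2 * ((\<integral>x. (L2_set (\<lambda>j. x j - c j) {..<p})\<^sup>2 * w x \<partial>M) / integral\<^sup>L M w)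
              + 1 / (2 * t) * ((\<integral>x. e x * w x \<partial>M) / integral\<^sup>L M w)"
proof -
  define r where "r x = L2_set (\<lambda>j. x j - c j) {..<p}" for x
  have split: "r x \<le> \<rho> + t / 2 * (r x)\<^sup>2 + 1 / (2 * t) * e x" if "x \<in> space M" for x
  proof (cases "\<rho> < r x")
    case True
    then show ?thesis
      using le_half_square_plus_inverse[OF \<open>0 < t\<close>, of "r x"] tail(3)[OF that] \<open>0 \<le> \<rho>\<close> \<open>0 < t\<close>
      unfolding r_def by (smt (verit, best) divide_pos_pos mult_left_mono mult_cancel_left1)
  next
    case False
    then show ?thesis
      using tail(2)[OF that] \<open>0 < t\<close> by (simp add: not_less add_increasing2)
  qed
  have "(\<integral>x. r x * w x \<partial>M)
      \<le> (\<integral>x. \<rho> * w x + t / 2 * ((r x)\<^sup>2 * w x) + 1 / (2 * t) * (e x * w x) \<partial>M)"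
  proof (rule integral_mono)
    show "integrable M (\<lambda>x. r x * w x)"
      unfolding r_def by (rule integrable_L2_set_dist_mult[OF coord w(1,2) moments])
    show "integrable M (\<lambda>x. \<rho> * w x + t / 2 * ((r x)\<^sup>2 * w x) + 1 / (2 * t) * (e x * w x))"
      using w(1) second_moment tail(1) unfolding r_def by auto
    fix x assume "x \<in> space M"
    from mult_right_mono[OF split[OF this] w(2)[OF this]]
    show "r x * w x \<le> \<rho> * w x + t / 2 * ((r x)\<^sup>2 * w x) + 1 / (2 * t) * (e x * w x)"
      by (simp add: algebra_simps)
  qed
  also have "\<dots> = \<rho> * integral\<^sup>L M w + t / 2 * (\<integral>x. (r x)\<^sup>2 * w x \<partial>M)
                    + 1 / (2 * t) * (\<integral>x. e x * w x \<partial>M)"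
    using w(1) second_moment tail(1) unfolding r_def by simp
  finally have "(\<integral>x. r x * w x \<partial>M) / integral\<^sup>L M w
      \<le> (\<rho> * integral\<^sup>L M w + t / 2 * (\<integral>x. (r x)\<^sup>2 * w x \<partial>M)
          + 1 / (2 * t) * (\<integral>x. e x * w x \<partial>M)) / integral\<^sup>L M w"
    using w(3) by (simp add: divide_right_mono)
  also have "\<dots> = \<rho> + t / 2 * ((\<integral>x. (r x)\<^sup>2 * w x \<partial>M) / integral\<^sup>L M w)
         + 1 / (2 * t) * ((\<integral>x. e x * w x \<partial>M) / integral\<^sup>L M w)"
    using w(3) by (simp add: field_simps)
  finally show ?thesis
    using L2_set_weighted_mean_le[OF coord w moments, where c = c and p = p]
    unfolding r_def by linarith
qed

section \<open>Product samples and likelihood ratios\<close>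

lemma sigma_finite_Leb: "sigma_finite_measure (Leb p)"
proof -
  interpret product_sigma_finite "\<lambda>_::nat. lborel :: real measure"
    unfolding product_sigma_finite_def by (simp add: sigma_finite_lborel)
  show ?thesis
    unfolding Leb_def by (rule sigma_finite) simp
qed

lemma Leb_component_measurable:
  assumes "j < p"
  shows "(\<lambda>x. x j) \<in> borel_measurable (Leb p)"
  using measurable_component_singleton[of j "{..<p}" "\<lambda>_. lborel"] assms by (simp add: Leb_def)

lemma measurable_l2norm_ext0_diff:
  assumes "\<theta> \<in> Rp p"
  shows "(\<lambda>x. l2norm (ext0 p x - \<theta>)) \<in> borel_measurable (Leb p)"
  unfolding l2norm_ext0_diff[OF assms] L2_set_def using Leb_component_measurable by measurable

lemma measurable_indicator_ext0_l2norm: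
  assumes "\<theta> \<in> Rp p" and "Measurable.pred borel Q"
  shows "(\<lambda>x. indicator {\<theta>'. Q (l2norm (\<theta>' - \<theta>))} (ext0 p x) :: real) \<in> borel_measurable (Leb p)"
proof -
  note measurable_l2norm_ext0_diff[OF assms(1), measurable] assms(2)[measurable]
  have "(\<lambda>x. indicator {x. Q (l2norm (ext0 p x - \<theta>))} x :: real) \<in> borel_measurable (Leb p)"
    by measurable
  then show ?thesis
    by (simp add: indicator_def)
qed

lemma space_sample: "space (sample \<nu> dens \<theta> n) = PiE {..<n} (\<lambda>_. space \<nu>)"
  by (simp add: sample_def space_PiM)

lemma sample_component_measurable:
  assumes "i < n"
  shows "(\<lambda>Z. Z i) \<in> measurable (sample \<nu> dens \<theta> n) \<nu>"
proof -
  have "(\<lambda>Z. Z i) \<in> measurable (sample \<nu> dens \<theta> n) (density \<nu> (dens \<theta>))"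
    unfolding sample_def using assms by (intro measurable_component_singleton) auto
  then show ?thesis
    by (simp add: measurable_cong_sets[OF refl sets_density])
qed

lemma prob_space_sample: "prob_space (density \<nu> (dens \<theta>)) \<Longrightarrow> prob_space (sample \<nu> dens \<theta> n)"
  unfolding sample_def by (rule prob_space_PiM) simp

lemma lik_nonneg:
  assumes "\<And>z. z \<in> space \<nu> \<Longrightarrow> 0 \<le> dens \<theta> z" and "Z \<in> space (sample \<nu> dens \<theta>' n)"
  shows "0 \<le> lik dens n \<theta> Z"
  using assms by (auto simp: lik_def space_sample intro!: prod_nonneg)

lemma measurable_lik:
  "dens \<theta> \<in> borel_measurable \<nu> \<Longrightarrow> lik dens n \<theta> \<in> borel_measurable (sample \<nu> dens \<theta>' n)"
  unfolding lik_def[abs_def]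
  by (intro borel_measurable_prod measurable_compose[OF sample_component_measurable]) auto

lemma measurable_lik_joint:
  assumes "(\<lambda>(x, z). dens (f x) z) \<in> borel_measurable (N \<Otimes>\<^sub>M \<nu>)"
  shows "(\<lambda>(Z, x). lik dens n (f x) Z) \<in> borel_measurable (sample \<nu> dens \<theta> n \<Otimes>\<^sub>M N)"
proof -
  have "(\<lambda>Zx. dens (f (snd Zx)) (fst Zx i)) \<in> borel_measurable (sample \<nu> dens \<theta> n \<Otimes>\<^sub>M N)"
    if "i < n" for i
    using measurable_compose[OF measurable_Pair[OF measurable_snd
          measurable_compose[OF measurable_fst sample_component_measurable[OF that]]] assms]
    by simp
  then show ?thesis
    unfolding lik_def case_prod_beta' by (intro borel_measurable_prod) auto
qed

lemma nn_integral_density_ratio_le_1: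
  fixes d0 d1 :: "'z \<Rightarrow> real"
  assumes [measurable]: "d0 \<in> borel_measurable \<nu>" "d1 \<in> borel_measurable \<nu>"
    and nonneg: "\<And>z. z \<in> space \<nu> \<Longrightarrow> 0 \<le> d0 z" "\<And>z. z \<in> space \<nu> \<Longrightarrow> 0 \<le> d1 z"
    and prob: "prob_space (density \<nu> d1)"
  shows "(\<integral>\<^sup>+ z. ennreal (d1 z / d0 z) \<partial>density \<nu> d0) \<le> 1"
proof -
  have "(\<integral>\<^sup>+ z. ennreal (d1 z / d0 z) \<partial>density \<nu> d0) = (\<integral>\<^sup>+ z. ennreal (d0 z) * ennreal (d1 z / d0 z) \<partial>\<nu>)"
    by (rule nn_integral_density) auto
  also have "\<dots> \<le> (\<integral>\<^sup>+ z. ennreal (d1 z) * indicator (space \<nu>) z \<partial>\<nu>)"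
  proof (rule nn_integral_mono)
    fix z assume z: "z \<in> space \<nu>"
    have "d0 z * (d1 z / d0 z) \<le> d1 z"
      using nonneg[OF z] by (cases "d0 z = 0") auto
    then show "ennreal (d0 z) * ennreal (d1 z / d0 z) \<le> ennreal (d1 z) * indicator (space \<nu>) z"
      using z nonneg[OF z] by (simp add: ennreal_mult[symmetric] ennreal_leI)
  qed
  also have "\<dots> = emeasure (density \<nu> d1) (space \<nu>)"
    by (subst emeasure_density) auto
  also have "\<dots> = 1"
    using prob_space.emeasure_space_1[OF prob] by simp
  finally show ?thesis .
qed

lemma nn_integral_lik_ratio_le_1:
  assumes "dens \<theta>0 \<in> borel_measurable \<nu>" "dens \<theta> \<in> borel_measurable \<nu>"
    and "\<And>z. z \<in> space \<nu> \<Longrightarrow> 0 \<le> dens \<theta>0 z" "\<And>z. z \<in> space \<nu> \<Longrightarrow> 0 \<le> dens \<theta> z"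
    and "prob_space (density \<nu> (dens \<theta>0))" "prob_space (density \<nu> (dens \<theta>))"
  shows "(\<integral>\<^sup>+ Z. ennreal (lik dens n \<theta> Z / lik dens n \<theta>0 Z) \<partial>sample \<nu> dens \<theta>0 n) \<le> 1"
proof -
  interpret product_sigma_finite "\<lambda>_. density \<nu> (dens \<theta>0)"
    unfolding product_sigma_finite_def using prob_space_imp_sigma_finite[OF assms(5)] by simp
  have "(\<integral>\<^sup>+ Z. ennreal (lik dens n \<theta> Z / lik dens n \<theta>0 Z) \<partial>sample \<nu> dens \<theta>0 n)
      = (\<integral>\<^sup>+ Z. (\<Prod>i<n. ennreal (dens \<theta> (Z i) / dens \<theta>0 (Z i))) \<partial>sample \<nu> dens \<theta>0 n)"
  proof (intro nn_integral_cong)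
    fix Z assume "Z \<in> space (sample \<nu> dens \<theta>0 n)"
    then have "\<And>i. i < n \<Longrightarrow> 0 \<le> dens \<theta> (Z i) / dens \<theta>0 (Z i)"
      using assms(3,4) by (auto simp: space_sample PiE_iff)
    then show "ennreal (lik dens n \<theta> Z / lik dens n \<theta>0 Z) = (\<Prod>i<n. ennreal (dens \<theta> (Z i) / dens \<theta>0 (Z i)))"
      by (subst prod_ennreal) (auto simp: lik_def prod_dividef)
  qed
  also have "\<dots> = (\<Prod>i<n. \<integral>\<^sup>+ z. ennreal (dens \<theta> z / dens \<theta>0 z) \<partial>density \<nu> (dens \<theta>0))"
    using product_nn_integral_prod[of "{..<n}" "\<lambda>_ z. ennreal (dens \<theta> z / dens \<theta>0 z)"] assms(1,2)
    by (simp add: sample_def)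
  also have "\<dots> \<le> (\<Prod>i<n. 1)"
    by (intro prod_mono_ennreal nn_integral_density_ratio_le_1) (use assms in auto)
  finally show ?thesis by simp
qed

section \<open>The posterior for a fixed sample size\<close>

locale bayes_model =
  fixes \<nu> :: "'z measure" and dens :: "(nat \<Rightarrow> real) \<Rightarrow> 'z \<Rightarrow> real"
    and \<theta>0 :: "nat \<Rightarrow> real" and n p :: nat and prior :: "(nat \<Rightarrow> real) \<Rightarrow> real"
  assumes dens_nonneg: "\<And>\<theta> z. \<theta> \<in> insert \<theta>0 (Rp p) \<Longrightarrow> z \<in> space \<nu> \<Longrightarrow> 0 \<le> dens \<theta> z"
    and dens_measurable: "\<And>\<theta>. \<theta> \<in> insert \<theta>0 (Rp p) \<Longrightarrow> dens \<theta> \<in> borel_measurable \<nu>"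
    and dens_prob_space: "\<And>\<theta>. \<theta> \<in> insert \<theta>0 (Rp p) \<Longrightarrow> prob_space (density \<nu> (dens \<theta>))"
    and dens_joint_measurable: "(\<lambda>(x, z). dens (ext0 p x) z) \<in> borel_measurable (Leb p \<Otimes>\<^sub>M \<nu>)"
    and prior_nonneg: "\<And>\<theta>. \<theta> \<in> Rp p \<Longrightarrow> 0 \<le> prior \<theta>"
    and prior_measurable: "(\<lambda>x. prior (ext0 p x)) \<in> borel_measurable (Leb p)"
begin

abbreviation P :: "(nat \<Rightarrow> 'z) measure" where
  "P \<equiv> sample \<nu> dens \<theta>0 n"

abbreviation lik_ratio :: "(nat \<Rightarrow> 'z) \<Rightarrow> (nat \<Rightarrow> real) \<Rightarrow> real" where
  "lik_ratio Z x \<equiv> lik dens n (ext0 p x) Z / lik dens n \<theta>0 Z"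

abbreviation ratio_mass :: "(nat \<Rightarrow> 'z) \<Rightarrow> (nat \<Rightarrow> real) set \<Rightarrow> real" where
  "ratio_mass Z B \<equiv> \<integral>x. indicator B (ext0 p x) * lik_ratio Z x * prior (ext0 p x) \<partial>Leb p"

abbreviation posterior_regular :: "(nat \<Rightarrow> 'z) \<Rightarrow> bool" where
  "posterior_regular Z \<equiv> 0 < post_norm dens prior n p Z
     \<and> integrable (Leb p) (\<lambda>x. lik dens n (ext0 p x) Z * prior (ext0 p x))
     \<and> (\<forall>j. integrable (Leb p) (\<lambda>x. ext0 p x j * lik dens n (ext0 p x) Z * prior (ext0 p x)))"

lemma prob_space_P: "prob_space P"
  by (intro prob_space_sample dens_prob_space) simp

lemma posterior_weight_nonneg:
  assumes "Z \<in> space P"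
  shows "0 \<le> lik dens n (ext0 p x) Z * prior (ext0 p x)"
  by (intro mult_nonneg_nonneg lik_nonneg[OF _ assms] dens_nonneg prior_nonneg) (simp_all add: ext0_in_Rp)

lemma measurable_lik_joint_P [measurable]:
  "(\<lambda>(Z, x). lik dens n (ext0 p x) Z) \<in> borel_measurable (P \<Otimes>\<^sub>M Leb p)"
  by (rule measurable_lik_joint[where f = "ext0 p" and dens = dens, OF dens_joint_measurable])

lemma measurable_lik_section:
  "Z \<in> space P \<Longrightarrow> (\<lambda>x. lik dens n (ext0 p x) Z) \<in> borel_measurable (Leb p)"
  using measurable_Pair2[OF measurable_lik_joint_P] by simp

lemma measurable_lik_\<theta>0 [measurable]: "lik dens n \<theta>0 \<in> borel_measurable P"
  by (intro measurable_lik dens_measurable) simp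

declare prior_measurable [measurable]

lemma measurable_post_prob:
  assumes [measurable]: "(\<lambda>x. indicator F (ext0 p x) :: real) \<in> borel_measurable (Leb p)"
  shows "(\<lambda>Z. post_prob dens prior n p Z F) \<in> borel_measurable P"
proof -
  interpret sigma_finite_measure "Leb p"
    by (rule sigma_finite_Leb)
  show ?thesis
    unfolding post_prob_def post_norm_def by measurable
qed

lemma measurable_ratio_mass:
  assumes [measurable]: "(\<lambda>x. indicator B (ext0 p x) :: real) \<in> borel_measurable (Leb p)"
  shows "(\<lambda>Z. ratio_mass Z B) \<in> borel_measurable P"
proof -
  interpret sigma_finite_measure "Leb p"
    by (rule sigma_finite_Leb)
  show ?thesis
    by measurable
qed

lemma nn_integral_weighted_lik_ratio_le:
  assumes [measurable]: "g \<in> borel_measurable (Leb p)" and g: "\<And>x. 0 \<le> g x"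
  shows "(\<lambda>Z. \<integral>\<^sup>+ x. ennreal (g x * lik_ratio Z x) \<partial>Leb p) \<in> borel_measurable P"
    and "(\<integral>\<^sup>+ Z. (\<integral>\<^sup>+ x. ennreal (g x * lik_ratio Z x) \<partial>Leb p) \<partial>P) \<le> (\<integral>\<^sup>+ x. ennreal (g x) \<partial>Leb p)"
proof -
  interpret pair_sigma_finite P "Leb p"
    unfolding pair_sigma_finite_def
    using prob_space_imp_sigma_finite[OF prob_space_P] sigma_finite_Leb by auto
  have joint [measurable]: "(\<lambda>(Z, x). ennreal (g x * lik_ratio Z x)) \<in> borel_measurable (P \<Otimes>\<^sub>M Leb p)"
    by measurable
  then show "(\<lambda>Z. \<integral>\<^sup>+ x. ennreal (g x * lik_ratio Z x) \<partial>Leb p) \<in> borel_measurable P"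
    by measurable
  have "(\<integral>\<^sup>+ Z. (\<integral>\<^sup>+ x. ennreal (g x * lik_ratio Z x) \<partial>Leb p) \<partial>P)
      = (\<integral>\<^sup>+ x. (\<integral>\<^sup>+ Z. ennreal (g x * lik_ratio Z x) \<partial>P) \<partial>Leb p)"
    using Fubini'[OF joint] by simp
  also have "\<dots> = (\<integral>\<^sup>+ x. ennreal (g x) * (\<integral>\<^sup>+ Z. ennreal (lik_ratio Z x) \<partial>P) \<partial>Leb p)"
  proof (intro nn_integral_cong)
    fix x
    have [measurable]: "lik dens n (ext0 p x) \<in> borel_measurable P"
      by (intro measurable_lik dens_measurable) (simp add: ext0_in_Rp)
    show "(\<integral>\<^sup>+ Z. ennreal (g x * lik_ratio Z x) \<partial>P) = ennreal (g x) * (\<integral>\<^sup>+ Z. ennreal (lik_ratio Z x) \<partial>P)"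
      unfolding ennreal_mult'[OF g] by (rule nn_integral_cmult) measurable
  qed
  also have "\<dots> \<le> (\<integral>\<^sup>+ x. ennreal (g x) * 1 \<partial>Leb p)"
    using dens_nonneg dens_measurable dens_prob_space ext0_in_Rp
    by (intro nn_integral_mono mult_left_mono nn_integral_lik_ratio_le_1) auto
  finally show "(\<integral>\<^sup>+ Z. (\<integral>\<^sup>+ x. ennreal (g x * lik_ratio Z x) \<partial>Leb p) \<partial>P) \<le> (\<integral>\<^sup>+ x. ennreal (g x) \<partial>Leb p)"
    by simp
qed

lemma measure_weighted_lik_ratio_ge_le:
  assumes [measurable]: "g \<in> borel_measurable (Leb p)" and "\<And>x. 0 \<le> g x"
    and moment: "(\<integral>\<^sup>+ x. ennreal (g x) \<partial>Leb p) \<le> ennreal m" and "0 \<le> m" "0 < a"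
  shows "measure P {Z \<in> space P. a \<le> \<integral>\<^sup>+ x. ennreal (g x * lik_ratio Z x) \<partial>Leb p} \<le> m / a"
proof -
  interpret prob_space P
    by (rule prob_space_P)
  define X where "X Z = (\<integral>\<^sup>+ x. ennreal (g x * lik_ratio Z x) \<partial>Leb p)" for Z
  have [measurable]: "X \<in> borel_measurable P"
    unfolding X_def[abs_def] by (rule nn_integral_weighted_lik_ratio_le(1)[OF assms(1,2)])
  have "{Z \<in> space P. a \<le> X Z} \<subseteq> {Z \<in> space P. 1 \<le> ennreal (1 / a) * X Z}"
  proof safe
    fix Z assume "ennreal a \<le> X Z"
    then have "ennreal (1 / a) * ennreal a \<le> ennreal (1 / a) * X Z"
      by (rule mult_left_mono) simp
    then show "1 \<le> ennreal (1 / a) * X Z"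
      using \<open>0 < a\<close> by (simp add: ennreal_mult[symmetric])
  qed
  then have "emeasure P {Z \<in> space P. a \<le> X Z} \<le> emeasure P {Z \<in> space P. 1 \<le> ennreal (1 / a) * X Z}"
    by (rule emeasure_mono) measurable
  also have "\<dots> \<le> ennreal (1 / a) * (\<integral>\<^sup>+ Z. X Z * indicator (space P) Z \<partial>P)"
    by (rule nn_integral_Markov_inequality; measurable)
  also have "(\<integral>\<^sup>+ Z. X Z * indicator (space P) Z \<partial>P) = (\<integral>\<^sup>+ Z. X Z \<partial>P)"
    by (rule nn_integral_cong) simp
  also have "ennreal (1 / a) * \<dots> \<le> ennreal (1 / a) * ennreal m"
    using nn_integral_weighted_lik_ratio_le(2)[OF assms(1,2)] moment unfolding X_def
    by (intro mult_left_mono) auto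
  also have "\<dots> = ennreal (m / a)"
    using assms by (simp add: ennreal_mult[symmetric])
  finally show ?thesis
    using assms by (simp add: X_def emeasure_eq_measure)
qed

lemma l2norm_post_mean_diff:
  assumes "\<theta>s \<in> Rp p"
  shows "l2norm (post_mean dens prior n p Z - \<theta>s)
    = L2_set (\<lambda>j. (\<integral>x. x j * (lik dens n (ext0 p x) Z * prior (ext0 p x)) \<partial>Leb p)
                    / post_norm dens prior n p Z - \<theta>s j) {..<p}"
proof -
  have "l2norm (post_mean dens prior n p Z - \<theta>s) = L2_set (post_mean dens prior n p Z - \<theta>s) {..<p}"
    using assms by (intro l2norm_eq_L2_set) (auto simp: Rp_def post_mean_def ext0_def)
  also have "\<dots> = L2_set (\<lambda>j. (\<integral>x. x j * (lik dens n (ext0 p x) Z * prior (ext0 p x)) \<partial>Leb p)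
                    / post_norm dens prior n p Z - \<theta>s j) {..<p}"
    by (intro L2_set_cong) (auto simp: post_mean_def ext0_def mult.assoc)
  finally show ?thesis .
qed

lemma evidence_gt_ratio_mass:
  assumes Z: "Z \<in> space P" "posterior_regular Z" and "0 \<le> a" "a < ratio_mass Z B"
  shows "0 < lik dens n \<theta>0 Z" and "a * lik dens n \<theta>0 Z < post_norm dens prior n p Z"
proof -
  define l0 where "l0 = lik dens n \<theta>0 Z"
  have "l0 \<noteq> 0"
    using assms(3,4) by (auto simp: l0_def)
  moreover have "0 \<le> l0"
    unfolding l0_def by (rule lik_nonneg[OF _ Z(1)]) (simp add: dens_nonneg)
  ultimately show l0: "0 < lik dens n \<theta>0 Z"
    by (simp add: l0_def)
  have "a < ratio_mass Z B"
    by (fact assms(4))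
  also have "\<dots> \<le> (\<integral>x. lik dens n (ext0 p x) Z * prior (ext0 p x) / l0 \<partial>Leb p)"
    using Z posterior_weight_nonneg l0
    by (intro integral_mono_AE' AE_I2) (auto simp: l0_def indicator_def)
  also have "\<dots> = post_norm dens prior n p Z / l0"
    by (simp add: post_norm_def)
  finally show "a * lik dens n \<theta>0 Z < post_norm dens prior n p Z"
    using l0 by (simp add: l0_def field_simps)
qed

lemma posterior_second_moment_le:
  assumes Z: "Z \<in> space P" "posterior_regular Z"
    and q [measurable]: "q \<in> borel_measurable (Leb p)" "\<And>x. 0 \<le> q x"
    and ball: "exp (- C * s) < ratio_mass Z B"
    and moment: "(\<integral>\<^sup>+ x. ennreal (q x * prior (ext0 p x) * lik_ratio Z x) \<partial>Leb p) < ennreal m"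
  shows "integrable (Leb p) (\<lambda>x. q x * (lik dens n (ext0 p x) Z * prior (ext0 p x)))"
    and "(\<integral>x. q x * (lik dens n (ext0 p x) Z * prior (ext0 p x)) \<partial>Leb p) / post_norm dens prior n p Z
           \<le> exp (C * s) * m"
proof -
  define w where "w = (\<lambda>x. lik dens n (ext0 p x) Z * prior (ext0 p x))"
  define l0 where "l0 = lik dens n \<theta>0 Z"
  note evidence = evidence_gt_ratio_mass[OF Z _ ball, folded l0_def, simplified]
  have "(\<integral>\<^sup>+ x. ennreal (q x * w x) \<partial>Leb p)
      = (\<integral>\<^sup>+ x. ennreal l0 * ennreal (q x * prior (ext0 p x) * lik_ratio Z x) \<partial>Leb p)"
    using evidence(1) q(2) posterior_weight_nonneg[OF Z(1)]
    by (intro nn_integral_cong) (simp add: w_def l0_def ennreal_mult'[symmetric] field_simps)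
  also have "\<dots> = ennreal l0 * (\<integral>\<^sup>+ x. ennreal (q x * prior (ext0 p x) * lik_ratio Z x) \<partial>Leb p)"
    by (intro nn_integral_cmult measurable_compose[OF _ measurable_ennreal] borel_measurable_times
        borel_measurable_divide q(1) prior_measurable measurable_lik_section[OF Z(1)] borel_measurable_const)
  also have "\<dots> \<le> ennreal (l0 * m)"
    using moment evidence(1) by (simp add: ennreal_mult' mult_left_mono)
  finally have nn: "(\<integral>\<^sup>+ x. ennreal (q x * w x) \<partial>Leb p) \<le> ennreal (l0 * m)" .
  have "0 < m"
    using le_less_trans[OF zero_le moment] by simp
  show integrable: "integrable (Leb p) (\<lambda>x. q x * w x)"
    using nn q(2) posterior_weight_nonneg[OF Z(1)] borel_measurable_integrable Z(2)
    by (intro integrableI_nonneg) (auto simp: w_def intro: le_less_trans)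
  have "(\<integral>x. q x * w x \<partial>Leb p) \<le> l0 * m"
    using nn evidence(1) \<open>0 < m\<close> q(2) posterior_weight_nonneg[OF Z(1)]
    by (subst (asm) nn_integral_eq_integral[OF integrable]) (auto simp: w_def)
  also have "\<dots> \<le> exp (C * s) * post_norm dens prior n p Z * m"
    using evidence(2) \<open>0 < m\<close> by (intro mult_right_mono) (auto simp: exp_minus field_simps)
  finally show "(\<integral>x. q x * (lik dens n (ext0 p x) Z * prior (ext0 p x)) \<partial>Leb p) / post_norm dens prior n p Z
           \<le> exp (C * s) * m"
    using Z(2) by (simp add: w_def field_simps)
qed

lemma posterior_mean_dist_le:
  assumes \<theta>s: "\<theta>s \<in> Rp p" and Z: "Z \<in> space P" "posterior_regular Z"
    and F: "\<And>x. \<rho> < l2norm (ext0 p x - \<theta>s) \<Longrightarrow> ext0 p x \<in> F"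
      "(\<lambda>x. indicator F (ext0 p x) :: real) \<in> borel_measurable (Leb p)"
    and "0 \<le> \<rho>" "0 \<le> s" "0 \<le> C" "M2 \<le> exp s"
    and far: "post_prob dens prior n p Z F < exp (- (2 * (C + 3)) * s)"
    and ball: "exp (- C * s) < ratio_mass Z B"
    and moment: "(\<integral>\<^sup>+ x. ennreal ((l2norm (ext0 p x - \<theta>s))\<^sup>2 * prior (ext0 p x) * lik_ratio Z x) \<partial>Leb p)
                   < ennreal (exp s * M2)"
  shows "l2norm (post_mean dens prior n p Z - \<theta>s) \<le> \<rho> + exp (- s)"
proof -
  define w where "w = (\<lambda>x. lik dens n (ext0 p x) Z * prior (ext0 p x))"
  define q where "q = (\<lambda>x. (l2norm (ext0 p x - \<theta>s))\<^sup>2)"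
  define t where "t = exp (- (C + 3) * s)"
  have q_L2_set: "q x = (L2_set (\<lambda>j. x j - \<theta>s j) {..<p})\<^sup>2" for x
    by (simp add: q_def l2norm_ext0_diff[OF \<theta>s])
  have q_measurable: "q \<in> borel_measurable (Leb p)"
    unfolding q_def using measurable_l2norm_ext0_diff[OF \<theta>s] by measurable
  note second_moment = posterior_second_moment_le[OF Z q_measurable _ ball, unfolded q_def, OF _ moment]
  have w: "integrable (Leb p) w" "\<And>x. 0 \<le> w x" "0 < integral\<^sup>L (Leb p) w"
    using Z posterior_weight_nonneg by (auto simp: w_def post_norm_def)
  have moments: "integrable (Leb p) (\<lambda>x. x j * w x)" if "j < p" for j
  proof -
    have "integrable (Leb p) (\<lambda>x. ext0 p x j * lik dens n (ext0 p x) Z * prior (ext0 p x))"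
      using Z(2) by blast
    then show ?thesis
      using that by (simp add: w_def ext0_def mult.assoc)
  qed
  have "l2norm (post_mean dens prior n p Z - \<theta>s)
      = L2_set (\<lambda>j. (\<integral>x. x j * w x \<partial>Leb p) / integral\<^sup>L (Leb p) w - \<theta>s j) {..<p}"
    by (simp add: l2norm_post_mean_diff[OF \<theta>s] w_def post_norm_def)
  also have "\<dots> \<le> \<rho> + t / 2 * ((\<integral>x. q x * w x \<partial>Leb p) / integral\<^sup>L (Leb p) w)
         + 1 / (2 * t) * ((\<integral>x. indicator F (ext0 p x) * w x \<partial>Leb p) / integral\<^sup>L (Leb p) w)"
    unfolding q_L2_set
  proof (rule weighted_mean_dist_split[OF Leb_component_measurable w moments])
    show "integrable (Leb p) (\<lambda>x. (L2_set (\<lambda>j. x j - \<theta>s j) {..<p})\<^sup>2 * w x)"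
      using second_moment(1) by (simp add: w_def q_L2_set[unfolded q_def])
    show "integrable (Leb p) (\<lambda>x. indicator F (ext0 p x) * w x)"
    proof (rule Bochner_Integration.integrable_bound[OF w(1)])
      show "(\<lambda>x. indicator F (ext0 p x) * w x) \<in> borel_measurable (Leb p)"
        using F(2) borel_measurable_integrable[OF w(1)] by (rule borel_measurable_times)
      show "AE x in Leb p. norm (indicator F (ext0 p x) * w x) \<le> norm (w x)"
        using w(2) by (auto simp: indicator_def)
    qed
  qed (use F(1) \<open>0 \<le> \<rho>\<close> in \<open>auto simp: t_def l2norm_ext0_diff[OF \<theta>s]\<close>)
  also have "\<dots> = \<rho> + t / 2 * ((\<integral>x. q x * w x \<partial>Leb p) / post_norm dens prior n p Z)
         + 1 / (2 * t) * post_prob dens prior n p Z F"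
    by (simp add: w_def post_prob_def post_norm_def mult.assoc)
  also have "\<dots> \<le> \<rho> + exp (- s)"
    using exp_tradeoff_le[OF \<open>0 \<le> C\<close> \<open>0 \<le> s\<close> \<open>M2 \<le> exp s\<close> second_moment(2) less_imp_le[OF far]]
    by (simp add: t_def q_def w_def)
  finally show ?thesis .
qed

lemma prior_second_moment_le:
  assumes \<theta>s: "\<theta>s \<in> Rp p" "l2norm \<theta>s \<le> c0"
    and prior: "integrable (Leb p) (\<lambda>x. prior (ext0 p x))" "(\<integral>x. prior (ext0 p x) \<partial>Leb p) = 1"
    and fourth: "integrable (Leb p) (\<lambda>x. (l2norm (ext0 p x))^4 * prior (ext0 p x))"
      "(\<integral>x. (l2norm (ext0 p x))^4 * prior (ext0 p x) \<partial>Leb p) \<le> M"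
  shows "(\<integral>\<^sup>+ x. ennreal ((l2norm (ext0 p x - \<theta>s))\<^sup>2 * prior (ext0 p x)) \<partial>Leb p)
           \<le> ennreal (2 + 2 * c0\<^sup>2 + 2 * \<bar>M\<bar>)"
proof -
  define h where "h x = (2 + 2 * c0\<^sup>2) * prior (ext0 p x) + 2 * ((l2norm (ext0 p x))^4 * prior (ext0 p x))" for x
  have pointwise: "(l2norm (ext0 p x - \<theta>s))\<^sup>2 * prior (ext0 p x) \<le> h x" for x
  proof -
    have "ext0 p x \<in> l2seq" "\<theta>s \<in> l2seq"
      using Rp_subset_l2seq ext0_in_Rp \<theta>s(1) by blast+
    from mult_right_mono[OF l2norm_diff_sq_le_fourth[OF this \<theta>s(2)] prior_nonneg[OF ext0_in_Rp]]
    show ?thesis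
      by (simp add: h_def algebra_simps)
  qed
  have "(\<integral>\<^sup>+ x. ennreal ((l2norm (ext0 p x - \<theta>s))\<^sup>2 * prior (ext0 p x)) \<partial>Leb p)
      \<le> (\<integral>\<^sup>+ x. ennreal (h x) \<partial>Leb p)"
    by (intro nn_integral_mono ennreal_leI pointwise)
  also have "\<dots> = ennreal (\<integral>x. h x \<partial>Leb p)"
    using prior fourth prior_nonneg[OF ext0_in_Rp]
    by (intro nn_integral_eq_integral) (auto simp: h_def)
  also have "(\<integral>x. h x \<partial>Leb p) = (2 + 2 * c0\<^sup>2) + 2 * (\<integral>x. (l2norm (ext0 p x))^4 * prior (ext0 p x) \<partial>Leb p)"
    using prior fourth by (simp add: h_def)
  also have "ennreal ((2 + 2 * c0\<^sup>2) + 2 * (\<integral>x. (l2norm (ext0 p x))^4 * prior (ext0 p x) \<partial>Leb p))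
      \<le> ennreal (2 + 2 * c0\<^sup>2 + 2 * \<bar>M\<bar>)"
    using fourth(2) by (intro ennreal_leI) simp
  finally show ?thesis .
qed

context
  fixes \<theta>s \<theta> :: "nat \<Rightarrow> real" and d \<rho> \<tau> s C M2 :: real and F B :: "(nat \<Rightarrow> real) set"
  assumes \<theta>s: "\<theta>s \<in> Rp p" and \<theta>: "\<theta> \<in> l2seq" "l2norm (\<theta>s - \<theta>) \<le> d"
    and threshold: "\<rho> + d + exp (- s) \<le> \<tau>"
    and F: "\<And>x. \<rho> < l2norm (ext0 p x - \<theta>s) \<Longrightarrow> ext0 p x \<in> F"
      "(\<lambda>x. indicator F (ext0 p x) :: real) \<in> borel_measurable (Leb p)"
    and B: "(\<lambda>x. indicator B (ext0 p x) :: real) \<in> borel_measurable (Leb p)"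
    and nonneg: "0 \<le> \<rho>" "0 \<le> s" "0 \<le> C" "1 \<le> M2"
    and prior_moment: "(\<integral>\<^sup>+ x. ennreal ((l2norm (ext0 p x - \<theta>s))\<^sup>2 * prior (ext0 p x)) \<partial>Leb p) \<le> ennreal M2"
    and regular: "AE Z in P. posterior_regular Z"
begin

lemma posterior_mean_le_threshold:
  assumes "M2 \<le> exp s" and Z: "Z \<in> space P" "posterior_regular Z"
    and "post_prob dens prior n p Z F < exp (- (2 * (C + 3)) * s)"
      "exp (- C * s) < ratio_mass Z B"
      "(\<integral>\<^sup>+ x. ennreal ((l2norm (ext0 p x - \<theta>s))\<^sup>2 * prior (ext0 p x) * lik_ratio Z x) \<partial>Leb p)
         < ennreal (exp s * M2)"
  shows "l2norm (post_mean dens prior n p Z - \<theta>) \<le> \<tau>"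
proof -
  have "l2norm (post_mean dens prior n p Z - \<theta>)
      \<le> l2norm (post_mean dens prior n p Z - \<theta>s) + l2norm (\<theta>s - \<theta>)"
    using post_mean_in_Rp \<theta>s \<theta>(1) Rp_subset_l2seq by (intro l2norm_diff_triangle) blast+
  also have "\<dots> \<le> \<rho> + exp (- s) + d"
    using posterior_mean_dist_le[OF \<theta>s Z F nonneg(1-3) assms(1,4-6)] \<theta>(2) by linarith
  finally show ?thesis
    using threshold by linarith
qed

lemma measure_posterior_mean_far_le:
  assumes "M2 \<le> exp s"
  shows "measure P {Z \<in> space P. \<tau> < l2norm (post_mean dens prior n p Z - \<theta>)}
    \<le> measure P {Z \<in> space P. exp (- (2 * (C + 3)) * s) \<le> post_prob dens prior n p Z F}
      + measure P {Z \<in> space P. ratio_mass Z B \<le> exp (- C * s)} + exp (- s)"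
proof -
  interpret prob_space P
    by (rule prob_space_P)
  define g where "g x = (l2norm (ext0 p x - \<theta>s))\<^sup>2 * prior (ext0 p x)" for x
  have g: "g \<in> borel_measurable (Leb p)" "\<And>x. 0 \<le> g x"
    using measurable_l2norm_ext0_diff[OF \<theta>s] prior_nonneg[OF ext0_in_Rp] unfolding g_def by auto
  define far_event where "far_event = {Z \<in> space P. exp (- (2 * (C + 3)) * s) \<le> post_prob dens prior n p Z F}"
  define ball_event where "ball_event = {Z \<in> space P. ratio_mass Z B \<le> exp (- C * s)}"
  define moment_event where "moment_event = {Z \<in> space P. exp s * M2 \<le> \<integral>\<^sup>+ x. ennreal (g x * lik_ratio Z x) \<partial>Leb p}"
  have sets: "far_event \<in> sets P" "ball_event \<in> sets P" "moment_event \<in> sets P"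
    using measurable_post_prob[OF F(2)] measurable_ratio_mass[OF B] nn_integral_weighted_lik_ratio_le(1)[OF g]
    unfolding far_event_def ball_event_def moment_event_def by measurable
  have "(\<integral>\<^sup>+ x. ennreal (g x) \<partial>Leb p) \<le> ennreal M2"
    using prior_moment by (simp add: g_def)
  then have "measure P moment_event \<le> M2 / (exp s * M2)"
    unfolding moment_event_def using g nonneg by (intro measure_weighted_lik_ratio_ge_le) auto
  also have "\<dots> = exp (- s)"
    using nonneg by (simp add: exp_minus inverse_eq_divide)
  finally have moment_le: "measure P moment_event \<le> exp (- s)" .
  have "AE Z in P. Z \<in> {Z \<in> space P. \<tau> < l2norm (post_mean dens prior n p Z - \<theta>)} \<longrightarrow> Z \<in> far_event \<union> ball_event \<union> moment_event"
    using regular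
  proof eventually_elim
    fix Z assume Z: "posterior_regular Z"
    show "Z \<in> {Z \<in> space P. \<tau> < l2norm (post_mean dens prior n p Z - \<theta>)} \<longrightarrow> Z \<in> far_event \<union> ball_event \<union> moment_event"
    proof (rule impI, rule ccontr)
      assume "Z \<in> {Z \<in> space P. \<tau> < l2norm (post_mean dens prior n p Z - \<theta>)}"
        and "Z \<notin> far_event \<union> ball_event \<union> moment_event"
      with posterior_mean_le_threshold[OF \<open>M2 \<le> exp s\<close> _ Z] show False
        by (simp add: far_event_def ball_event_def moment_event_def g_def not_le)
    qed
  qed
  then have "measure P {Z \<in> space P. \<tau> < l2norm (post_mean dens prior n p Z - \<theta>)} \<le> measure P (far_event \<union> ball_event \<union> moment_event)"
    using sets by (intro finite_measure_mono_AE) auto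
  also have "\<dots> \<le> measure P far_event + measure P ball_event + measure P moment_event"
    using sets measure_Un_le[of far_event P ball_event] measure_Un_le[of "far_event \<union> ball_event" P moment_event] by auto
  finally show ?thesis
    using moment_le by (simp add: far_event_def ball_event_def)
qed

lemma measure_posterior_mean_far_exp_le:
  assumes far: "measure P {Z \<in> space P. exp (- (2 * (C + 3)) * s) \<le> post_prob dens prior n p Z F}
                  \<le> C2 * exp (- C1 * s)"
    and ball: "measure P {Z \<in> space P. ratio_mass Z B \<le> exp (- C * s)} \<le> exp (- C4 * s)"
    and "0 \<le> C2" "0 \<le> c" "c \<le> C1" "c \<le> C4" "c \<le> 1"
  shows "measure P {Z \<in> space P. \<tau> < l2norm (post_mean dens prior n p Z - \<theta>)} \<le> (C2 + 2) * M2 * exp (- c * s)"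
proof (cases "M2 \<le> exp s")
  case True
  have "c * s \<le> C1 * s" "c * s \<le> C4 * s" "c * s \<le> 1 * s"
    using \<open>c \<le> C1\<close> \<open>c \<le> C4\<close> \<open>c \<le> 1\<close> by (simp_all only: mult_right_mono nonneg(2))
  then have exps: "exp (- C1 * s) \<le> exp (- c * s)" "exp (- C4 * s) \<le> exp (- c * s)" "exp (- s) \<le> exp (- c * s)"
    by simp_all
  have "C2 * exp (- C1 * s) \<le> C2 * exp (- c * s)"
    using exps(1) \<open>0 \<le> C2\<close> by (rule mult_left_mono)
  then have "C2 * exp (- C1 * s) + exp (- C4 * s) + exp (- s) \<le> (C2 + 2) * exp (- c * s)"
    using exps(2,3) unfolding distrib_right by linarith
  also have "\<dots> \<le> (C2 + 2) * M2 * exp (- c * s)"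
    using nonneg \<open>0 \<le> C2\<close> by (simp add: mult_le_cancel_right1 mult.assoc[symmetric])
  finally show ?thesis
    using measure_posterior_mean_far_le[OF True] far ball by linarith
next
  case False
  have "exp (c * s) \<le> exp s"
    using mult_right_mono[OF \<open>c \<le> 1\<close> nonneg(2)] by simp
  with False have "exp (c * s) \<le> M2"
    by linarith
  then have "1 \<le> M2 * exp (- c * s)"
    by (simp add: exp_minus field_simps)
  also have "\<dots> \<le> (C2 + 2) * M2 * exp (- c * s)"
    using nonneg \<open>0 \<le> C2\<close> by simp
  finally show ?thesis
    using prob_space.prob_le_1[OF prob_space_P] order.trans by blast
qed

end

lemma posterior_mean_deviation_le:
  fixes \<theta>s :: "nat \<Rightarrow> real" and \<delta> \<beta> L L1 C C1 C2 C4 c c0 M :: real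
  defines "far_set \<equiv> {\<theta>. l2norm (\<theta> - \<theta>s) powr \<beta> > L1 * \<delta>}"
    and "ball_set \<equiv> {\<theta>. l2norm (\<theta> - \<theta>s) \<le> \<delta>}"
  assumes \<theta>s: "\<theta>s \<in> Rp p" "l2norm \<theta>s \<le> c0" "l2norm (\<theta>0 - \<theta>s) \<le> c0 * \<delta> powr (1 / \<beta>)"
    and \<theta>0: "\<theta>0 \<in> l2seq"
    and "0 < \<delta>" "1 \<le> \<beta>" "0 < L1" "(L1 powr (1 / \<beta>) + c0) powr \<beta> \<le> L"
    and prior: "integrable (Leb p) (\<lambda>x. prior (ext0 p x))" "(\<integral>x. prior (ext0 p x) \<partial>Leb p) = 1"
    and fourth: "integrable (Leb p) (\<lambda>x. (l2norm (ext0 p x))^4 * prior (ext0 p x))"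
      "(\<integral>x. (l2norm (ext0 p x))^4 * prior (ext0 p x) \<partial>Leb p) \<le> M"
    and regular: "AE Z in P. posterior_regular Z"
    and far: "measure P {Z \<in> space P. post_prob dens prior n p Z far_set \<ge> exp (- (2 * (C + 3)) * n * \<delta>\<^sup>2)}
                \<le> C2 * exp (- C1 * n * \<delta>\<^sup>2)"
    and ball: "measure P {Z \<in> space P. ratio_mass Z ball_set \<le> exp (- C * n * \<delta>\<^sup>2)} \<le> exp (- C4 * n * \<delta>\<^sup>2)"
    and constants: "0 \<le> C" "0 \<le> C2" "0 \<le> c" "c \<le> C1" "c \<le> C4" "c \<le> 1"
  shows "measure P {Z \<in> space P. l2norm (post_mean dens prior n p Z - \<theta>0)
             > exp (- real n * \<delta>\<^sup>2) + L powr (1 / \<beta>) * \<delta> powr (1 / \<beta>)}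
           \<le> (C2 + 2) * (2 + 2 * c0\<^sup>2 + 2 * \<bar>M\<bar>) * exp (- c * n * \<delta>\<^sup>2)"
proof -
  have c0: "0 \<le> c0"
    using \<theta>s(1,2) Rp_subset_l2seq l2norm_nonneg by fastforce
  note prior_moment = prior_second_moment_le[OF \<theta>s(1,2) prior fourth]
  have "(L1 * \<delta>) powr (1 / \<beta>) + c0 * \<delta> powr (1 / \<beta>) \<le> L powr (1 / \<beta>) * \<delta> powr (1 / \<beta>)"
    using \<open>0 < L1\<close> \<open>0 < \<delta>\<close> \<open>1 \<le> \<beta>\<close> \<open>(L1 powr (1 / \<beta>) + c0) powr \<beta> \<le> L\<close> c0
    by (intro root_sum_le_root) auto
  then have threshold: "(L1 * \<delta>) powr (1 / \<beta>) + c0 * \<delta> powr (1 / \<beta>) + exp (- (real n * \<delta>\<^sup>2))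
      \<le> exp (- real n * \<delta>\<^sup>2) + L powr (1 / \<beta>) * \<delta> powr (1 / \<beta>)"
    by simp
  have far_incl: "ext0 p x \<in> far_set" if "(L1 * \<delta>) powr (1 / \<beta>) < l2norm (ext0 p x - \<theta>s)" for x
  proof -
    have "L1 * \<delta> < l2norm (ext0 p x - \<theta>s) powr \<beta>"
      by (rule less_powr_if_root_less[OF _ _ that]) (use \<open>0 < L1\<close> \<open>0 < \<delta>\<close> \<open>1 \<le> \<beta>\<close> in auto)
    then show ?thesis
      unfolding far_set_def mem_Collect_eq .
  qed
  have "Measurable.pred borel (\<lambda>r. L1 * \<delta> < r powr \<beta>)" "Measurable.pred borel (\<lambda>r. r \<le> \<delta>)"
    by measurable measurable
  with measurable_indicator_ext0_l2norm[OF \<theta>s(1), where Q = "\<lambda>r. L1 * \<delta> < r powr \<beta>"]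
    measurable_indicator_ext0_l2norm[OF \<theta>s(1), where Q = "\<lambda>r. r \<le> \<delta>"]
  have indicators_measurable:
    "(\<lambda>x. indicator far_set (ext0 p x) :: real) \<in> borel_measurable (Leb p)"
    "(\<lambda>x. indicator ball_set (ext0 p x) :: real) \<in> borel_measurable (Leb p)"
    unfolding far_set_def ball_set_def by simp_all
  have dist: "l2norm (\<theta>s - \<theta>0) \<le> c0 * \<delta> powr (1 / \<beta>)"
    using \<theta>s(3) by (simp add: l2norm_minus_commute)
  have nonneg: "0 \<le> (L1 * \<delta>) powr (1 / \<beta>)" "0 \<le> real n * \<delta>\<^sup>2" "1 \<le> 2 + 2 * c0\<^sup>2 + 2 * \<bar>M\<bar>"
    by simp_all
  have n_delta_sq: "\<And>x. x * real n * \<delta>\<^sup>2 = x * (real n * \<delta>\<^sup>2)"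
    by (simp add: mult.assoc)
  from measure_posterior_mean_far_exp_le[OF \<theta>s(1) \<theta>0 dist threshold far_incl indicators_measurable
      nonneg(1,2) constants(1) nonneg(3) prior_moment regular far[unfolded n_delta_sq] ball[unfolded n_delta_sq] constants(2-6)]
  show ?thesis
    unfolding n_delta_sq .
qed

end

lemma bayes_modelI:
  fixes \<nu> :: "'z measure" and dens :: "(nat \<Rightarrow> real) \<Rightarrow> 'z \<Rightarrow> real"
    and p :: nat and prior :: "(nat \<Rightarrow> real) \<Rightarrow> real"
  assumes "insert \<theta>0 (Rp p) \<subseteq> \<Theta>"
    and "\<And>\<theta> z. \<theta> \<in> \<Theta> \<Longrightarrow> z \<in> space \<nu> \<Longrightarrow> 0 \<le> dens \<theta> z"
    and "\<And>\<theta>. \<theta> \<in> \<Theta> \<Longrightarrow> dens \<theta> \<in> borel_measurable \<nu>"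
    and "\<And>\<theta>. \<theta> \<in> \<Theta> \<Longrightarrow> prob_space (density \<nu> (dens \<theta>))"
    and "(\<lambda>(x, z). dens (ext0 p x) z) \<in> borel_measurable (Leb p \<Otimes>\<^sub>M \<nu>)"
    and "\<And>\<theta>. \<theta> \<in> Rp p \<Longrightarrow> 0 \<le> prior \<theta>"
    and "(\<lambda>x. prior (ext0 p x)) \<in> borel_measurable (Leb p)"
  shows "bayes_model \<nu> dens \<theta>0 p prior"
proof (rule bayes_model.intro, goal_cases)
  case 1
  then show ?case using assms(1) by (intro assms(2)) blast+
next
  case 2
  then show ?case using assms(1) by (intro assms(3)) blast
next
  case 3
  then show ?case using assms(1) by (intro assms(4)) blast
qed (use assms in simp_all)

section \<open>Concentration of the posterior mean\<close>

text \<open>The exponent of the far-set event must beat the small-ball exponent C3, so (A) is used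
  twice: with c = 1 to fix C3, and then with c = 2(C3 + 3).\<close>

lemma obtain_far_rate_after_ball_rate:
  fixes far_prob :: "real \<Rightarrow> real \<Rightarrow> nat \<Rightarrow> real" and ball_prob :: "real \<Rightarrow> nat \<Rightarrow> real"
    and \<delta> :: "nat \<Rightarrow> real"
  assumes "\<And>c. c > 0 \<Longrightarrow> \<exists>L0. \<forall>L\<ge>L0. \<exists>C1>0. \<exists>C2>0. \<exists>C3>0. \<exists>C4>0. \<forall>n.
      far_prob L c n \<le> C2 * exp (- C1 * n * (\<delta> n)^2) \<and> ball_prob C3 n \<le> exp (- C4 * n * (\<delta> n)^2)"
  obtains C1 C2 C3 C4 L1 where "0 < C1" "0 < C2" "0 < C3" "0 < C4" "0 < L1"
    "\<And>n. far_prob L1 (2 * (C3 + 3)) n \<le> C2 * exp (- C1 * n * (\<delta> n)^2)"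
    "\<And>n. ball_prob C3 n \<le> exp (- C4 * n * (\<delta> n)^2)"
proof -
  obtain La where "\<forall>L\<ge>La. \<exists>C1>0. \<exists>C2>0. \<exists>C3>0. \<exists>C4>0. \<forall>n.
      far_prob L 1 n \<le> C2 * exp (- C1 * n * (\<delta> n)^2) \<and> ball_prob C3 n \<le> exp (- C4 * n * (\<delta> n)^2)"
    using assms[of 1] by auto
  from this[rule_format, OF order_refl]
  obtain C3 C4 where C3: "0 < C3" "0 < C4" "\<And>n. ball_prob C3 n \<le> exp (- C4 * n * (\<delta> n)^2)"
    by blast
  obtain Lb where "\<forall>L\<ge>Lb. \<exists>C1>0. \<exists>C2>0. \<exists>C3'>0. \<exists>C4'>0. \<forall>n.
      far_prob L (2 * (C3 + 3)) n \<le> C2 * exp (- C1 * n * (\<delta> n)^2)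
      \<and> ball_prob C3' n \<le> exp (- C4' * n * (\<delta> n)^2)"
    using assms[of "2 * (C3 + 3)"] C3(1) by auto
  then obtain C1 C2 where "0 < C1" "0 < C2"
    "\<And>n. far_prob (max Lb 1) (2 * (C3 + 3)) n \<le> C2 * exp (- C1 * n * (\<delta> n)^2)"
    by (meson max.cobounded1)
  with C3 show thesis
    using that[of C1 C2 C3 C4 "max Lb 1"] by auto
qed

theorem lemma5p6:
  fixes \<Theta> :: "(nat \<Rightarrow> real) set"
    and \<nu> :: "'z measure"
    and dens :: "(nat \<Rightarrow> real) \<Rightarrow> 'z \<Rightarrow> real"
    and \<theta>0 :: "nat \<Rightarrow> real"
    and p :: "nat \<Rightarrow> nat"
    and \<pi> :: "nat \<Rightarrow> (nat \<Rightarrow> real) \<Rightarrow> real"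
    and grad :: "nat \<Rightarrow> (nat \<Rightarrow> real) \<Rightarrow> nat \<Rightarrow> real"
    and c0 \<beta> m\<pi> \<Lambda>\<pi> :: real
    and \<theta>star :: "nat \<Rightarrow> nat \<Rightarrow> real"
    and \<delta> :: "nat \<Rightarrow> real"
  assumes Theta_l2: "\<Theta> \<subseteq> l2seq"
    and Rp_Theta: "\<And>n. Rp (p n) \<subseteq> \<Theta>"
    and theta0: "\<theta>0 \<in> \<Theta>"
    and dens_nonneg: "\<And>\<theta> z. \<theta> \<in> \<Theta> \<Longrightarrow> z \<in> space \<nu> \<Longrightarrow> 0 \<le> dens \<theta> z"
    and dens_meas: "\<And>\<theta>. \<theta> \<in> \<Theta> \<Longrightarrow> dens \<theta> \<in> borel_measurable \<nu>"
    and dens_prob: "\<And>\<theta>. \<theta> \<in> \<Theta> \<Longrightarrow> prob_space (density \<nu> (dens \<theta>))"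
    and dens_joint: "\<And>n. (\<lambda>(x, z). dens (ext0 (p n) x) z) \<in> borel_measurable (Leb (p n) \<Otimes>\<^sub>M \<nu>)"
    and post_welldef: "\<And>n. AE Z in sample \<nu> dens \<theta>0 n.
         0 < post_norm dens (\<pi> n) n (p n) Z
       \<and> integrable (Leb (p n)) (\<lambda>x. lik dens n (ext0 (p n) x) Z * \<pi> n (ext0 (p n) x))
       \<and> (\<forall>j. integrable (Leb (p n)) (\<lambda>x. ext0 (p n) x j * lik dens n (ext0 (p n) x) Z * \<pi> n (ext0 (p n) x)))"
    \<comment> \<open>Assumption (A)\<close>
    and c0_pos: "c0 > 0"
    and thstar_Rp: "\<And>n. \<theta>star n \<in> Rp (p n)"
    and thstar_bd: "\<And>n. l2norm (\<theta>star n) \<le> c0"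
    and delta_pos: "\<And>n. 0 < \<delta> n"
    and delta_lim: "\<delta> \<longlonglongrightarrow> 0"
    and beta_ge: "\<beta> \<ge> 1"
    and A: "\<And>c. c > 0 \<Longrightarrow> \<exists>L0. \<forall>L\<ge>L0. \<exists>C1>0. \<exists>C2>0. \<exists>C3>0. \<exists>C4>0. \<forall>n.
         measure (sample \<nu> dens \<theta>0 n)
           {Z \<in> space (sample \<nu> dens \<theta>0 n).
              post_prob dens (\<pi> n) n (p n) Z {\<theta>. l2norm (\<theta> - \<theta>star n) powr \<beta> > L * \<delta> n}
                \<ge> exp (- c * n * (\<delta> n)^2)}
           \<le> C2 * exp (- C1 * n * (\<delta> n)^2)
       \<and> measure (sample \<nu> dens \<theta>0 n)
           {Z \<in> space (sample \<nu> dens \<theta>0 n).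
              (\<integral>x. indicator {\<theta>. l2norm (\<theta> - \<theta>star n) \<le> \<delta> n} (ext0 (p n) x)
                   * (lik dens n (ext0 (p n) x) Z / lik dens n \<theta>0 Z) * \<pi> n (ext0 (p n) x) \<partial>Leb (p n))
                \<le> exp (- C3 * n * (\<delta> n)^2)}
           \<le> exp (- C4 * n * (\<delta> n)^2)"
    \<comment> \<open>Assumption (B)\<close>
    and prior_pos: "\<And>n \<theta>. \<theta> \<in> Rp (p n) \<Longrightarrow> 0 < \<pi> n \<theta>"
    and prior_meas: "\<And>n. (\<lambda>x. \<pi> n (ext0 (p n) x)) \<in> borel_measurable (Leb (p n))"
    and prior_prob: "\<And>n. integrable (Leb (p n)) (\<lambda>x. \<pi> n (ext0 (p n) x))
                        \<and> (\<integral>x. \<pi> n (ext0 (p n) x) \<partial>Leb (p n)) = 1"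
    and grad_deriv: "\<And>n \<theta> i. \<theta> \<in> Rp (p n) \<Longrightarrow> i < p n \<Longrightarrow>
         ((\<lambda>t. ln (\<pi> n (\<theta>(i := \<theta> i + t)))) has_real_derivative grad n \<theta> i) (at 0)"
    and m_pos: "m\<pi> > 0"
    and strong_conc: "\<And>n \<theta> \<theta>'. \<theta> \<in> Rp (p n) \<Longrightarrow> \<theta>' \<in> Rp (p n) \<Longrightarrow>
         ln (\<pi> n \<theta>') \<le> ln (\<pi> n \<theta>) + (\<Sum>i<p n. (\<theta>' i - \<theta> i) * grad n \<theta> i)
                          - m\<pi> / 2 * (l2norm (\<theta> - \<theta>'))^2"
    and Lambda_pos: "\<Lambda>\<pi> > 0"
    and grad_lip: "\<And>n \<theta> \<theta>'. \<theta> \<in> Rp (p n) \<Longrightarrow> \<theta>' \<in> Rp (p n) \<Longrightarrow>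
         sqrt (\<Sum>i<p n. (grad n \<theta> i - grad n \<theta>' i)^2) \<le> \<Lambda>\<pi> * l2norm (\<theta> - \<theta>')"
    and prior_max: "\<And>n. \<exists>\<theta>m\<in>Rp (p n). (\<forall>\<theta>\<in>Rp (p n). ln (\<pi> n \<theta>) \<le> ln (\<pi> n \<theta>m)) \<and> l2norm \<theta>m \<le> c0"
    and fourth_mom: "\<exists>M. \<forall>n. integrable (Leb (p n)) (\<lambda>x. (l2norm (ext0 (p n) x))^4 * \<pi> n (ext0 (p n) x))
                        \<and> (\<integral>x. (l2norm (ext0 (p n) x))^4 * \<pi> n (ext0 (p n) x) \<partial>Leb (p n)) \<le> M"
    \<comment> \<open>Additional hypothesis of the lemma\<close>
    and close: "\<And>n. l2norm (\<theta>0 - \<theta>star n) \<le> c0 * (\<delta> n) powr (1 / \<beta>)"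
  shows "\<exists>c>0. \<exists>c'>0. \<exists>L0. \<forall>L\<ge>L0. \<forall>n.
           measure (sample \<nu> dens \<theta>0 n)
             {Z \<in> space (sample \<nu> dens \<theta>0 n).
                l2norm (post_mean dens (\<pi> n) n (p n) Z - \<theta>0)
                  > exp (- n * (\<delta> n)^2) + L powr (1 / \<beta>) * (\<delta> n) powr (1 / \<beta>)}
           \<le> c' * exp (- c * n * (\<delta> n)^2)"
proof -
  define far_prob where "far_prob L c n = measure (sample \<nu> dens \<theta>0 n) {Z \<in> space (sample \<nu> dens \<theta>0 n).
      post_prob dens (\<pi> n) n (p n) Z {\<theta>. l2norm (\<theta> - \<theta>star n) powr \<beta> > L * \<delta> n}
        \<ge> exp (- c * n * (\<delta> n)^2)}" for L c n
  define ball_prob where "ball_prob C n = measure (sample \<nu> dens \<theta>0 n) {Z \<in> space (sample \<nu> dens \<theta>0 n).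
      (\<integral>x. indicator {\<theta>. l2norm (\<theta> - \<theta>star n) \<le> \<delta> n} (ext0 (p n) x)
         * (lik dens n (ext0 (p n) x) Z / lik dens n \<theta>0 Z) * \<pi> n (ext0 (p n) x) \<partial>Leb (p n))
        \<le> exp (- C * n * (\<delta> n)^2)}" for C n
  obtain C1 C2 C3 C4 L1 where C: "0 < C1" "0 < C2" "0 < C3" "0 < C4" "0 < L1"
    and rates: "\<And>n. far_prob L1 (2 * (C3 + 3)) n \<le> C2 * exp (- C1 * n * (\<delta> n)^2)"
      "\<And>n. ball_prob C3 n \<le> exp (- C4 * n * (\<delta> n)^2)"
    using A[folded far_prob_def ball_prob_def] by (elim obtain_far_rate_after_ball_rate) blast
  obtain M where M: "\<And>n. integrable (Leb (p n)) (\<lambda>x. (l2norm (ext0 (p n) x))^4 * \<pi> n (ext0 (p n) x))"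
      "\<And>n. (\<integral>x. (l2norm (ext0 (p n) x))^4 * \<pi> n (ext0 (p n) x) \<partial>Leb (p n)) \<le> M"
    using fourth_mom by blast
  define c where "c = min (min C1 C4) 1"
  have c: "0 < c" "c \<le> C1" "c \<le> C4" "c \<le> 1"
    using C by (auto simp: c_def)
  define c' where "c' = (C2 + 2) * (2 + 2 * c0\<^sup>2 + 2 * \<bar>M\<bar>)"
  have "measure (sample \<nu> dens \<theta>0 n) {Z \<in> space (sample \<nu> dens \<theta>0 n).
        l2norm (post_mean dens (\<pi> n) n (p n) Z - \<theta>0)
          > exp (- n * (\<delta> n)^2) + L powr (1 / \<beta>) * (\<delta> n) powr (1 / \<beta>)}
      \<le> c' * exp (- c * n * (\<delta> n)^2)" if "(L1 powr (1 / \<beta>) + c0) powr \<beta> \<le> L" for L n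
  proof -
    have "insert \<theta>0 (Rp (p n)) \<subseteq> \<Theta>"
      using theta0 Rp_Theta by blast
    from bayes_modelI[OF this dens_nonneg dens_meas dens_prob dens_joint less_imp_le[OF prior_pos] prior_meas]
    interpret model: bayes_model \<nu> dens \<theta>0 n "p n" "\<pi> n" .
    from model.posterior_mean_deviation_le[OF thstar_Rp thstar_bd close _ delta_pos beta_ge C(5) that
        prior_prob[THEN conjunct1] prior_prob[THEN conjunct2] M post_welldef
        rates[unfolded far_prob_def ball_prob_def] less_imp_le[OF C(3)] less_imp_le[OF C(2)]
        less_imp_le[OF c(1)] c(2-4)] Theta_l2 theta0
    show ?thesis
      unfolding c'_def by blast
  qed
  moreover have "0 < c'"
    using C(2) by (simp add: c'_def add_pos_nonneg)
  ultimately show ?thesis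
    using c(1) by blast
qed

end
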